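(* Let $\pi_1,\dots,\pi_m$ be permutations of order at least two with $|\pi_1|\ge|\pi_2|\ge\dots\ge|\pi_m|$. If there exist non-zero reals $t_1,\dots,t_m$ with $\sum_{i\in[m]}t_iP_{\pi_i}=0$, then $m\ge2$ and $|\pi_1|=|\pi_2|$.
   Context: A $k$-permutation is a bijection of $[k]=\{1,\dots,k\}$; $|\pi|$ denotes its order. The gradient polynomial of a $k$-permutation $\pi$ is $P_\pi(\alpha,\beta)=k!\sum_{m\in[k]}\left(\frac{k-m}{1-\alpha}-\frac{m-1}{\alpha}\right)\left(\frac{k-\pi(m)}{1-\beta}-\frac{\pi(m)-1}{\beta}\right)\frac{\alpha^{m-1}(1-\alpha)^{k-m}\beta^{\pi(m)-1}(1-\beta)^{k-\pi(m)}}{(m-1)!(k-m)!(\pi(m)-1)!(k-\pi(m))!}$, a polynomial in $\alpha,\beta$; the equation $\sum t_iP_{\pi_i}=0$ is an identity of polynomials. *)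

theory Defs
  imports "HOL-Combinatorics.Permutations" Complex_Main
begin

text \<open>The factor (k-m)/(1-x) - (m-1)/x times x^(m-1)(1-x)^(k-m), written
  as the polynomial it literally equals (the derivative of x^(m-1)(1-x)^(k-m)).
  Natural-number exponent truncation only occurs where the coefficient is 0.\<close>
definition dbern :: "nat \<Rightarrow> nat \<Rightarrow> real \<Rightarrow> real" where
  "dbern k m x = real (k - m) * x ^ (m - 1) * (1 - x) ^ (k - m - 1)
               - real (m - 1) * x ^ (m - 2) * (1 - x) ^ (k - m)"

definition gradP :: "nat \<Rightarrow> (nat \<Rightarrow> nat) \<Rightarrow> real \<Rightarrow> real \<Rightarrow> real" where
  "gradP k \<pi> \<alpha> \<beta> = fact k * (\<Sum>m\<in>{1..k}.
      dbern k m \<alpha> * dbern k (\<pi> m) \<beta> /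
      (fact (m - 1) * fact (k - m) * fact (\<pi> m - 1) * fact (k - \<pi> m)))"

end

theory Submission
  imports Defs
begin

text \<open>Let \<open>K = |\<pi>\<^sub>1|\<close>. Dividing the identity by \<open>\<alpha>^(K-2)\<close> and letting \<open>\<alpha> \<rightarrow> \<infinity>\<close> kills
  every \<open>P\<^sub>\<pi>\<close> with \<open>|\<pi>| < K\<close> and leaves the coefficients of \<open>\<alpha>^(K-2)\<close> of the others.
  If \<open>\<pi>\<^sub>1\<close> were the only permutation of order \<open>K\<close>, that coefficient of \<open>P\<^sub>\<pi>\<^sub>1\<close> would
  vanish identically in \<open>\<beta>\<close>. It is a linear combination of the derivatives of the
  Bernstein polynomials of degree \<open>K - 1\<close>, whose only linear relations are those with
  constant coefficients (the Bernstein polynomials are independent and sum to \<open>1\<close>).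
  But the coefficients here, read through \<open>\<pi>\<^sub>1\<close>, differ at the positions \<open>1\<close> and \<open>2\<close>.\<close>

lemma tendsto_power_one_minus_power_div_power:
  "((\<lambda>x::real. x^a * (1-x)^b / x^(a+b+d)) \<longlongrightarrow> (if d = 0 then (-1)^b else 0)) at_top"
proof -
  have inverse_0: "((\<lambda>x::real. inverse x) \<longlongrightarrow> 0) at_top"
    by (rule tendsto_inverse_0_at_top) (rule filterlim_ident)
  have "((\<lambda>x::real. inverse x - 1) \<longlongrightarrow> 0 - 1) at_top"
    by (intro tendsto_intros inverse_0)
  moreover have "\<forall>\<^sub>F x in at_top. inverse x - 1 = (1-x) / (x::real)"
    using eventually_gt_at_top[of "0::real"] by eventually_elim (simp add: field_simps)
  ultimately have "((\<lambda>x::real. (1-x) / x) \<longlongrightarrow> -1) at_top"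
    by (simp add: tendsto_cong)
  then have lim: "((\<lambda>x::real. ((1-x)/x)^b * (inverse x)^d) \<longlongrightarrow> (-1)^b * 0^d) at_top"
    by (intro tendsto_intros inverse_0)
  have "\<forall>\<^sub>F x::real in at_top. ((1-x)/x)^b * (inverse x)^d = x^a * (1-x)^b / x^(a+b+d)"
    using eventually_gt_at_top[of "0::real"]
  proof eventually_elim
    case (elim x)
    then show ?case by (simp add: power_add power_divide field_simps)
  qed
  with lim have "((\<lambda>x::real. x^a * (1-x)^b / x^(a+b+d)) \<longlongrightarrow> (-1)^b * 0^d) at_top"
    by (rule Lim_transform_eventually)
  then show ?thesis by (cases d) auto
qed

text \<open>\<^term>\<open>dbern k m\<close> is minus the derivative of \<open>x^(m-1) (1-x)^(k-m)\<close>, whose leading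
  term is \<open>(-1)^(k-m) x^(k-1)\<close>.\<close>
definition dbern_lead :: "nat \<Rightarrow> nat \<Rightarrow> real" where
  "dbern_lead k m = - real (k - 1) * (-1) ^ (k - m)"

lemma dbern_lead_eq:
  assumes "1 \<le> m" "m \<le> k"
  shows "real (k - m) * (-1) ^ (k - m - 1) - real (m - 1) * (-1) ^ (k - m) = dbern_lead k m"
proof (cases "m = k")
  case False
  with assms obtain n where n: "k - m = Suc n" by (metis Suc_diff_Suc le_neq_implies_less)
  moreover have "real (m - 1) = real m - 1" "real k = real m + real n + 1"
    using assms n by (simp_all add: of_nat_diff)
  ultimately show ?thesis unfolding dbern_lead_def n by (simp add: algebra_simps)
qed (simp add: dbern_lead_def)

lemma tendsto_dbern_div_power:
  assumes "1 \<le> j" "j \<le> k" "2 \<le> k" "k \<le> K"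
  shows "((\<lambda>x. dbern k j x / x^(K-2)) \<longlongrightarrow> (if k = K then dbern_lead k j else 0)) at_top"
proof -
  let ?c = "\<lambda>e. if K - k = 0 then (-1::real)^e else 0"
  have first: "((\<lambda>x::real. real (k-j) * (x^(j-1) * (1-x)^(k-j-1) / x^(K-2)))
      \<longlongrightarrow> real (k-j) * ?c (k-j-1)) at_top"
  proof (cases "j = k")
    case False
    then have "K-2 = (j-1) + (k-j-1) + (K-k)" using assms by simp
    then show ?thesis by (simp only:) (intro tendsto_mult_left tendsto_power_one_minus_power_div_power)
  qed simp
  have second: "((\<lambda>x::real. real (j-1) * (x^(j-2) * (1-x)^(k-j) / x^(K-2)))
      \<longlongrightarrow> real (j-1) * ?c (k-j)) at_top"
  proof (cases "j = 1")
    case False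
    then have "K-2 = (j-2) + (k-j) + (K-k)" using assms by simp
    then show ?thesis by (simp only:) (intro tendsto_mult_left tendsto_power_one_minus_power_div_power)
  qed simp
  have "(\<lambda>x. dbern k j x / x^(K-2)) = (\<lambda>x::real.
      real (k-j) * (x^(j-1) * (1-x)^(k-j-1) / x^(K-2)) - real (j-1) * (x^(j-2) * (1-x)^(k-j) / x^(K-2)))"
    by (simp add: dbern_def diff_divide_distrib mult.assoc)
  moreover have "K - k = 0 \<longleftrightarrow> k = K" using assms by auto
  ultimately show ?thesis
    using tendsto_diff[OF first second] dbern_lead_eq[OF assms(1,2)] by (cases "k = K") simp_all
qed

definition gradP_lead :: "nat \<Rightarrow> (nat \<Rightarrow> nat) \<Rightarrow> real \<Rightarrow> real" where
  "gradP_lead k \<pi> \<beta> = fact k * (\<Sum>m\<in>{1..k}.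
      dbern_lead k m * dbern k (\<pi> m) \<beta> / (fact (m-1) * fact (k-m) * fact (\<pi> m - 1) * fact (k - \<pi> m)))"

lemma tendsto_gradP_div_power:
  assumes "2 \<le> k" "k \<le> K"
  shows "((\<lambda>\<alpha>. gradP k \<pi> \<alpha> \<beta> / \<alpha>^(K-2)) \<longlongrightarrow> (if k = K then gradP_lead k \<pi> \<beta> else 0)) at_top"
proof -
  define w where "w m = dbern k (\<pi> m) \<beta> / (fact (m-1) * fact (k-m) * fact (\<pi> m - 1) * fact (k - \<pi> m))" for m
  have "((\<lambda>\<alpha>. fact k * (\<Sum>m\<in>{1..k}. dbern k m \<alpha> / \<alpha>^(K-2) * w m))
      \<longlongrightarrow> fact k * (\<Sum>m\<in>{1..k}. (if k = K then dbern_lead k m else 0) * w m)) at_top"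
    by (intro tendsto_mult_left tendsto_sum tendsto_mult_right tendsto_dbern_div_power) (use assms in auto)
  moreover have "gradP k \<pi> \<alpha> \<beta> / \<alpha>^(K-2) = fact k * (\<Sum>m\<in>{1..k}. dbern k m \<alpha> / \<alpha>^(K-2) * w m)" for \<alpha>
    unfolding gradP_def times_divide_eq_right[symmetric] sum_divide_distrib by (simp add: w_def mult.commute)
  moreover have "gradP_lead k \<pi> \<beta> = fact k * (\<Sum>m\<in>{1..k}. dbern_lead k m * w m)"
    by (simp add: gradP_lead_def w_def)
  ultimately show ?thesis by (cases "k = K") simp_all
qed

lemma sum_gradP_lead_eq_0:
  assumes "finite I"
    and "\<And>i. i \<in> I \<Longrightarrow> 2 \<le> k i \<and> k i \<le> K"
    and "\<And>\<alpha> \<beta>. (\<Sum>i\<in>I. t i * gradP (k i) (\<pi> i) \<alpha> \<beta>) = 0"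
  shows "(\<Sum>i\<in>{i\<in>I. k i = K}. t i * gradP_lead K (\<pi> i) \<beta>) = 0"
proof -
  have "((\<lambda>\<alpha>. \<Sum>i\<in>I. t i * (gradP (k i) (\<pi> i) \<alpha> \<beta> / \<alpha>^(K-2)))
      \<longlongrightarrow> (\<Sum>i\<in>I. t i * (if k i = K then gradP_lead (k i) (\<pi> i) \<beta> else 0))) at_top"
    by (intro tendsto_sum tendsto_mult_left tendsto_gradP_div_power) (use assms(2) in auto)
  moreover have "(\<Sum>i\<in>I. t i * (gradP (k i) (\<pi> i) \<alpha> \<beta> / \<alpha>^(K-2))) = 0" for \<alpha>
    using assms(3) by (simp add: sum_divide_distrib[symmetric])
  ultimately have "(\<Sum>i\<in>I. t i * (if k i = K then gradP_lead (k i) (\<pi> i) \<beta> else 0)) = 0"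
    by (simp add: tendsto_const_iff)
  then show ?thesis using assms(1) by (simp add: sum.inter_filter[symmetric] if_distrib cong: if_cong)
qed

definition bern :: "nat \<Rightarrow> nat \<Rightarrow> real \<Rightarrow> real" where
  "bern K j x = x^(j-1) * (1-x)^(K-j) / (fact (j-1) * fact (K-j))"

lemma has_real_derivative_bern:
  "(bern K j has_real_derivative - dbern K j x / (fact (j-1) * fact (K-j))) (at x)"
proof -
  have "((\<lambda>x. x^(j-1) * (1-x)^(K-j)) has_real_derivative - dbern K j x) (at x)"
    unfolding dbern_def
    by (auto intro!: derivative_eq_intros simp: algebra_simps diff_diff_left numeral_2_eq_2)
  then show ?thesis
    unfolding bern_def[abs_def] by (rule DERIV_cdivide)
qed

lemma sum_bern:
  assumes "1 \<le> K"
  shows "(\<Sum>j\<in>{1..K}. bern K j x) = 1 / fact (K-1)"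
proof -
  obtain n where K: "K = Suc n" using assms by (cases K) auto
  have "(\<Sum>j\<in>{1..K}. bern K j x) = (\<Sum>i\<le>n. x^i * (1-x)^(n-i) / (fact i * fact (n-i)))"
    unfolding K One_nat_def sum.shift_bounds_cl_Suc_ivl atLeast0AtMost[symmetric] by (simp add: bern_def)
  also have "\<dots> = (\<Sum>i\<le>n. of_nat (n choose i) * x^i * (1-x)^(n-i)) / fact n"
    unfolding sum_divide_distrib by (intro sum.cong refl) (simp add: binomial_fact field_simps)
  also have "\<dots> = (x + (1-x))^n / fact n"
    using binomial_ring[of x "1-x" n] by simp
  finally show ?thesis by (simp add: K)
qed

lemma bern_linear_independent:
  assumes "\<And>x. (\<Sum>j\<in>{1..K}. e j * bern K j x) = 0" "j \<in> {1..K}"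
  shows "e j = 0"
proof -
  obtain n where K: "K = Suc n" using assms(2) by (cases K) auto
  define c where "c i = e (Suc i) / (fact i * fact (n-i))" for i
  have "(\<Sum>i\<le>n. c i * y^i) = 0" if "y > 0" for y :: real
  proof -
    txt \<open>Substitute \<open>x = y / (1 + y)\<close> and clear the denominator \<open>(1 + y)^n\<close>.\<close>
    have "(\<Sum>j\<in>{1..K}. e j * bern K j (y/(1+y))) = (\<Sum>i\<le>n. e (Suc i) * bern K (Suc i) (y/(1+y)))"
      unfolding K One_nat_def sum.shift_bounds_cl_Suc_ivl atLeast0AtMost[symmetric] by simp
    also have "\<dots> = (\<Sum>i\<le>n. c i * y^i / (1+y)^n)"
    proof (intro sum.cong refl)
      fix i assume "i \<in> {..n}"
      then have "(1+y)^n = (1+y)^i * (1+y)^(n-i)" by (simp add: power_add[symmetric])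
      moreover have "1 - y/(1+y) = 1/(1+y)" using that by (simp add: field_simps)
      ultimately show "e (Suc i) * bern K (Suc i) (y/(1+y)) = c i * y^i / (1+y)^n"
        using that by (simp add: bern_def c_def K power_divide field_simps)
    qed
    finally show ?thesis using assms(1) that by (simp add: sum_divide_distrib[symmetric])
  qed
  then have "{0<..} \<subseteq> {y::real. (\<Sum>i\<le>n. c i * y^i) = 0}" by auto
  then have "\<not> finite {y::real. (\<Sum>i\<le>n. c i * y^i) = 0}"
    using infinite_Ioi finite_subset by blast
  then have "\<forall>i\<le>n. c i = 0" using polyfun_finite_roots by blast
  then show "e j = 0" using assms(2) unfolding c_def K by (cases j) auto
qed

lemma dbern_relation_coeffs_const:
  assumes "1 \<le> K"
    and "\<And>x. (\<Sum>j\<in>{1..K}. d j * dbern K j x / (fact (j-1) * fact (K-j))) = 0"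
    and "j \<in> {1..K}"
  shows "d j = d 1"
proof -
  define B where "B x = (\<Sum>j\<in>{1..K}. d j * bern K j x)" for x
  have "(B has_real_derivative 0) (at x)" for x
  proof -
    have "(B has_real_derivative (\<Sum>j\<in>{1..K}. d j * (- dbern K j x / (fact (j-1) * fact (K-j))))) (at x)"
      unfolding B_def[abs_def] by (intro DERIV_sum DERIV_cmult has_real_derivative_bern)
    then show ?thesis using assms(2)[of x] by (simp add: sum_negf)
  qed
  then have "B x = B 0" for x using DERIV_isconst_all by blast
  also have "B 0 = d 1 / fact (K-1)"
  proof -
    have "B 0 = (\<Sum>j\<in>{1..K}. if j = 1 then d 1 / fact (K-1) else 0)"
      unfolding B_def bern_def by (intro sum.cong refl) auto
    then show ?thesis using assms(1) by simp
  qed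
  finally have "(\<Sum>j\<in>{1..K}. (d j - d 1) * bern K j x) = 0" for x
    using sum_bern[OF assms(1), of x]
    by (simp add: B_def left_diff_distrib sum_subtractf sum_distrib_left[symmetric])
  then have "d j - d 1 = 0" by (rule bern_linear_independent[OF _ assms(3)])
  then show ?thesis by simp
qed

lemma dbern_lead_weights_ne:
  assumes "2 \<le> K"
  shows "dbern_lead K 1 / fact (K-1) \<noteq> dbern_lead K 2 / fact (K-2)"
proof -
  obtain n where K: "K = n + 2" using assms by (metis add.commute le_Suc_ex)
  have "dbern_lead K 1 = real (n+1) * (-1)^n" "fact (K-1) = real (n+1) * fact n"
    by (simp_all add: K dbern_lead_def algebra_simps)
  then have "dbern_lead K 1 / fact (K-1) = (-1)^n / fact n"
    by simp
  moreover have "dbern_lead K 2 / fact (K-2) = - ((-1)^n * real (n+1)) / fact n"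
    by (simp add: K dbern_lead_def algebra_simps minus_divide_left)
  moreover have "(-1)^n / fact n \<noteq> - ((-1)^n * real (n+1)) / (fact n :: real)"
  proof
    assume "(-1)^n / fact n = - ((-1)^n * real (n+1)) / (fact n :: real)"
    then have "(-1)^n * (real n + 2) = (0::real)" by (simp add: divide_simps algebra_simps)
    then show False by simp
  qed
  ultimately show ?thesis by simp
qed

lemma gradP_lead_nonzero:
  assumes "2 \<le> K" "\<sigma> permutes {1..K}"
  obtains \<beta> where "gradP_lead K \<sigma> \<beta> \<noteq> 0"
proof -
  define w where "w m = dbern_lead K m / (fact (m-1) * fact (K-m))" for m
  have inv_\<sigma>: "inv \<sigma> (\<sigma> m) = m" for m using permutes_inverses(2)[OF assms(2)] .
  have "w 1 = w 2" if vanish: "\<And>\<beta>. gradP_lead K \<sigma> \<beta> = 0"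
  proof -
    have relation: "(\<Sum>j\<in>{1..K}. w (inv \<sigma> j) * dbern K j \<beta> / (fact (j-1) * fact (K-j))) = 0" for \<beta>
    proof -
      have "(\<Sum>j\<in>{1..K}. w (inv \<sigma> j) * dbern K j \<beta> / (fact (j-1) * fact (K-j)))
          = (\<Sum>m\<in>{1..K}. w m * dbern K (\<sigma> m) \<beta> / (fact (\<sigma> m - 1) * fact (K - \<sigma> m)))"
        by (subst sum.permute[OF assms(2)]) (simp only: comp_def inv_\<sigma>)
      also have "\<dots> = gradP_lead K \<sigma> \<beta> / fact K"
        unfolding gradP_lead_def w_def by (simp add: sum_divide_distrib mult.assoc)
      finally show ?thesis using vanish by simp
    qed
    have "1 \<le> K" using assms(1) by simp
    then have "w (inv \<sigma> j) = w (inv \<sigma> 1)" if "j \<in> {1..K}" for j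
      using relation that by (rule dbern_relation_coeffs_const)
    moreover have "\<sigma> 1 \<in> {1..K}" "\<sigma> 2 \<in> {1..K}"
      using assms(1) permutes_in_image[OF assms(2)] by auto
    ultimately show "w 1 = w 2" by (metis inv_\<sigma>)
  qed
  moreover have "w 1 \<noteq> w 2" using dbern_lead_weights_ne[OF assms(1)] by (simp add: w_def)
  ultimately show ?thesis using that by blast
qed

theorem lemma11:
  fixes m :: nat and k :: "nat \<Rightarrow> nat" and \<pi> :: "nat \<Rightarrow> nat \<Rightarrow> nat" and t :: "nat \<Rightarrow> real"
  assumes "m \<ge> 1"
    and "\<And>i. i \<in> {1..m} \<Longrightarrow> \<pi> i permutes {1..k i}"
    and "\<And>i. i \<in> {1..m} \<Longrightarrow> k i \<ge> 2"
    and "\<And>i j. 1 \<le> i \<Longrightarrow> i \<le> j \<Longrightarrow> j \<le> m \<Longrightarrow> k j \<le> k i"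
    and "\<And>i. i \<in> {1..m} \<Longrightarrow> t i \<noteq> 0"
    and "\<And>\<alpha> \<beta>. (\<Sum>i\<in>{1..m}. t i * gradP (k i) (\<pi> i) \<alpha> \<beta>) = 0"
  shows "m \<ge> 2 \<and> k 1 = k 2"
proof (rule ccontr)
  assume contra: "\<not> (m \<ge> 2 \<and> k 1 = k 2)"
  have one: "1 \<in> {1..m}" using assms(1) by simp
  have below: "k i < k 1" if "i \<in> {2..m}" for i
    using that contra assms(4)[of 2 i] assms(4)[of 1 2] by fastforce
  have top: "{i \<in> {1..m}. k i = k 1} = {1}"
  proof (intro equalityI subsetI)
    fix i assume "i \<in> {i \<in> {1..m}. k i = k 1}"
    then show "i \<in> {1}" using below[of i] by (cases "i = 1") auto
  qed (use one in auto)
  have "t 1 * gradP_lead (k 1) (\<pi> 1) \<beta> = 0" for \<beta>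
    using sum_gradP_lead_eq_0[of "{1..m}" k "k 1" t \<pi> \<beta>] assms(3,4,6) top by auto
  then have "gradP_lead (k 1) (\<pi> 1) \<beta> = 0" for \<beta> using assms(5)[OF one] by simp
  moreover obtain \<beta> where "gradP_lead (k 1) (\<pi> 1) \<beta> \<noteq> 0"
    using gradP_lead_nonzero assms(2,3)[OF one] by blast
  ultimately show False by blast
qed

end
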